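(* Let $V$ be a vector configuration of rank $r$ containing no copy of the zero vector, with dual degree $\deg^*(V)=\delta$ and with $n=r+d+1=2r+2\delta-1$ elements. Then $V$ admits a codegree$^*$ decomposition of length at least $r-1=d+1-2\delta$.
   Context: A vector configuration is a finite family (repetitions allowed) $V$ of vectors in $\mathbb{R}^r$; a subconfiguration is a subfamily, $\operatorname{rank}(V)=\dim\operatorname{lin}(V)$, and cardinalities count multiplicities. For a nonzero linear functional $f$, the oriented linear hyperplane $H=\{f=0\}$ has $H^+=\{f>0\}$, $\overline{H}^-=\{f\le0\}$. Dual codegree: $\operatorname{codeg}^*(W)=\min_H|\overline{H}^-\cap W|$; dual degree: $\deg^*(W)=\max_H|H^+\cap W|-\operatorname{rank}(W)$, over oriented linear hyperplanes $H$. A codegree$^*$ decomposition of $V$ of length $m$ is a partition $V=V_0\uplus V_1\uplus\dots\uplus V_m$ into subconfigurations ($V_0$ possibly empty) with $\operatorname{codeg}^*(V)=\sum_{i=1}^m\operatorname{codeg}^*(V_i)$ and $\operatorname{codeg}^*(V_i)\ge1$ for $i\ge1$. *)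

theory Defs
  imports "HOL-Analysis.Analysis"
begin

text \<open>A vector configuration is a finite family indexed by a finite set I, given by
  v :: 'i => 'a (repetitions allowed). Subconfigurations are subsets of the index set.
  Oriented linear hyperplanes {x. a \<bullet> x = 0}, a \<noteq> 0, with positive side a \<bullet> x > 0
  (every nonzero linear functional on a Euclidean space is of this form).\<close>

definition vc_rank :: "('i \<Rightarrow> 'a::euclidean_space) \<Rightarrow> 'i set \<Rightarrow> nat" where
  "vc_rank v W = dim (v ` W)"

definition codeg_star :: "('i \<Rightarrow> 'a::euclidean_space) \<Rightarrow> 'i set \<Rightarrow> nat" where
  "codeg_star v W = Min {card {i \<in> W. a \<bullet> v i \<le> 0} | a. a \<noteq> 0}"

definition deg_star :: "('i \<Rightarrow> 'a::euclidean_space) \<Rightarrow> 'i set \<Rightarrow> int" where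
  "deg_star v W = int (Max {card {i \<in> W. a \<bullet> v i > 0} | a. a \<noteq> 0}) - int (vc_rank v W)"

definition codeg_decomposition ::
  "('i \<Rightarrow> 'a::euclidean_space) \<Rightarrow> 'i set \<Rightarrow> nat \<Rightarrow> (nat \<Rightarrow> 'i set) \<Rightarrow> bool" where
  "codeg_decomposition v W m P \<longleftrightarrow>
     (\<Union>i\<le>m. P i) = W \<and>
     (\<forall>i\<le>m. \<forall>j\<le>m. i \<noteq> j \<longrightarrow> P i \<inter> P j = {}) \<and>
     codeg_star v W = (\<Sum>i=1..m. codeg_star v (P i)) \<and>
     (\<forall>i\<in>{1..m}. codeg_star v (P i) \<ge> 1)"

end

theory Submission
  imports Defs
begin

text \<open>
  Let \<open>K\<close> be the largest number of vectors of \<open>V\<close> in an open halfspace. The hypotheses say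
  \<open>K = r + \<delta>\<close> and \<open>n = 2K - 1\<close>: no open halfspace contains more than half of \<open>V\<close>.

  Under this balance condition a configuration of rank at least 3 contains an antipodal pair
  \<open>u, -c u\<close>. Otherwise, after central projection onto an affine hyperplane, the
  Sylvester--Gallai theorem yields two directions of \<open>V\<close> spanning a plane that contains no
  third one; the vectors of \<open>V\<close> in the plane are then positive multiples of these two, and a
  functional vanishing exactly on the plane, tilted towards them in both orientations, gives two
  open halfspaces that together count \<open>V\<close> plus at least two vectors, contradicting balance.

  Removing an antipodal pair preserves balance and lowers the rank by at most one, while the pair
  itself has codegree* 1, attained by every functional not vanishing on it. Induction therefore
  produces a partition \<open>V\<^sub>0, ..., V\<^sub>m\<close> with \<open>m \<ge> rank - 1\<close> and one functional that attains the
  codegree* of every \<open>V\<^sub>i\<close> (\<open>i \<ge> 1\<close>) and is positive on \<open>V\<^sub>0\<close>; it then attains the codegree*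
  of \<open>V\<close>, which is therefore the sum of those of the parts.
\<close>

section \<open>Linear algebra\<close>

lemma perturbation_keeps_strict_signs:
  fixes a b :: "'a::real_inner"
  assumes "finite F"
  shows "\<exists>t. \<forall>f\<in>F. (0 < a \<bullet> f \<longrightarrow> 0 < (t *\<^sub>R a + b) \<bullet> f) \<and>
                 (a \<bullet> f < 0 \<longrightarrow> (t *\<^sub>R a + b) \<bullet> f < 0)"
proof -
  define P where "P t f \<longleftrightarrow> (0 < a \<bullet> f \<longrightarrow> 0 < t * (a \<bullet> f) + b \<bullet> f) \<and>
                               (a \<bullet> f < 0 \<longrightarrow> t * (a \<bullet> f) + b \<bullet> f < 0)" for t f
  have "eventually (\<lambda>t. P t f) at_top" for f
  proof (rule eventually_mono[OF eventually_gt_at_top[of "\<bar>b \<bullet> f\<bar> / \<bar>a \<bullet> f\<bar>"]])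
    fix t assume "\<bar>b \<bullet> f\<bar> / \<bar>a \<bullet> f\<bar> < t"
    then have "a \<bullet> f \<noteq> 0 \<Longrightarrow> \<bar>b \<bullet> f\<bar> < t * \<bar>a \<bullet> f\<bar>" by (simp add: divide_less_eq)
    then show "P t f" by (auto simp: P_def abs_if split: if_splits)
  qed
  then have "eventually (\<lambda>t. \<forall>f\<in>F. P t f) at_top" by (simp add: eventually_ball_finite assms)
  then obtain t where "\<forall>f\<in>F. P t f" by (auto simp: eventually_at_top_linorder)
  then show ?thesis by (auto simp: P_def inner_add_left)
qed

lemma subspace_vector_nonorthogonal_to_all:
  fixes S :: "'a::real_inner set"
  assumes "subspace S" "finite F" "\<forall>f\<in>F. \<exists>s\<in>S. s \<bullet> f \<noteq> 0"
  shows "\<exists>s\<in>S. \<forall>f\<in>F. s \<bullet> f \<noteq> 0"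
  using assms(2,3)
proof (induction F rule: finite_induct)
  case empty
  then show ?case using assms(1) subspace_0 by blast
next
  case (insert g F)
  then obtain s where s: "s \<in> S" "\<forall>f\<in>F. s \<bullet> f \<noteq> 0" by auto
  obtain s' where s': "s' \<in> S" "s' \<bullet> g \<noteq> 0" using insert by auto
  show ?case
  proof (cases "s \<bullet> g = 0")
    case False
    then show ?thesis using s by auto
  next
    case True
    obtain t where "\<forall>f\<in>F. (0 < s \<bullet> f \<longrightarrow> 0 < (t *\<^sub>R s + s') \<bullet> f) \<and>
                           (s \<bullet> f < 0 \<longrightarrow> (t *\<^sub>R s + s') \<bullet> f < 0)"
      using perturbation_keeps_strict_signs[OF insert(1)] by blast
    with s have "\<forall>f\<in>F. (t *\<^sub>R s + s') \<bullet> f \<noteq> 0"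
      by (metis linorder_neqE_linordered_idom order_less_irrefl)
    moreover have "(t *\<^sub>R s + s') \<bullet> g \<noteq> 0" using True s' by (simp add: inner_add_left)
    moreover have "t *\<^sub>R s + s' \<in> S" using s s' assms(1) by (simp add: subspace_add subspace_scale)
    ultimately show ?thesis by blast
  qed
qed

lemma exists_normal_avoiding:
  fixes B F :: "'a::euclidean_space set"
  assumes "finite F" "F \<inter> span B = {}"
  shows "\<exists>a. (\<forall>b\<in>B. a \<bullet> b = 0) \<and> (\<forall>f\<in>F. a \<bullet> f \<noteq> 0)"
proof -
  define S where "S = {a. \<forall>b\<in>B. a \<bullet> b = 0}"
  have "subspace S" by (auto simp: subspace_def S_def inner_add_left)
  moreover have "\<exists>s\<in>S. s \<bullet> f \<noteq> 0" if "f \<in> F" for f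
  proof -
    obtain y z where y: "y \<in> span B" and z: "\<And>w. w \<in> span B \<Longrightarrow> orthogonal z w"
      and f: "f = y + z"
      using orthogonal_subspace_decomp_exists[of B f] by blast
    have "z \<in> S" using z by (auto simp: S_def span_base orthogonal_def)
    moreover have "z \<noteq> 0" using assms(2) that f y by auto
    moreover have "z \<bullet> f = z \<bullet> z" using z[OF y] f by (simp add: inner_add_right orthogonal_def)
    ultimately show ?thesis by (metis inner_eq_zero_iff)
  qed
  ultimately obtain a where "a \<in> S" "\<forall>f\<in>F. a \<bullet> f \<noteq> 0"
    using subspace_vector_nonorthogonal_to_all[OF _ assms(1)] by blast
  then show ?thesis by (auto simp: S_def)
qed

lemma span_pair_iff:
  fixes x a b :: "'a::real_vector"
  shows "x \<in> span {a, b} \<longleftrightarrow> (\<exists>\<alpha> \<beta>. x = \<alpha> *\<^sub>R a + \<beta> *\<^sub>R b)"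
proof
  assume "x \<in> span {a, b}"
  then show "\<exists>\<alpha> \<beta>. x = \<alpha> *\<^sub>R a + \<beta> *\<^sub>R b"
    by (auto simp: span_breakdown_eq span_singleton algebra_simps)
      (metis add.commute diff_add_cancel)
next
  assume "\<exists>\<alpha> \<beta>. x = \<alpha> *\<^sub>R a + \<beta> *\<^sub>R b"
  then show "x \<in> span {a, b}" by (auto simp: span_add span_base span_scale)
qed

lemma dim_ge_3_imp_independent_triple:
  fixes S :: "'a::euclidean_space set"
  assumes "3 \<le> dim S"
  shows "\<exists>u\<in>S. \<exists>w\<in>S. \<exists>z\<in>S. w \<notin> span {u} \<and> z \<notin> span {u, w}"
proof -
  have not_spanned: "\<not> S \<subseteq> span A" if "finite A" "card A \<le> 2" for A
    using dim_le_card[of S A] that assms by linarith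
  obtain u where u: "u \<in> S" using not_spanned[of "{}"] by auto
  obtain w where w: "w \<in> S" "w \<notin> span {u}" using not_spanned[of "{u}"] by auto
  have "card {u, w} \<le> 2" by (cases "u = w") auto
  then obtain z where z: "z \<in> S" "z \<notin> span {u, w}" using not_spanned[of "{u, w}"] by blast
  show ?thesis using u w z by blast
qed

lemma exists_inner_pos_pair:
  fixes u w :: "'a::real_inner"
  assumes "u \<noteq> 0" "w \<notin> span {u}"
  shows "\<exists>b. 0 < b \<bullet> u \<and> 0 < b \<bullet> w"
proof -
  let ?b = "sgn u + sgn w"
  have "w \<noteq> 0" using assms(2) span_zero by auto
  have unit: "sgn x \<bullet> sgn x = 1" if "x \<noteq> 0" for x :: 'a
    using that by (simp add: norm_sgn flip: power2_norm_eq_inner)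
  have "?b \<noteq> 0"
  proof
    assume "?b = 0"
    then have "sgn w = - sgn u" by (simp add: add_eq_0_iff)
    have "w = norm w *\<^sub>R sgn w" using \<open>w \<noteq> 0\<close> by (simp add: sgn_div_norm)
    also have "\<dots> = norm w *\<^sub>R (- sgn u)" by (simp add: \<open>sgn w = - sgn u\<close>)
    also have "\<dots> = (- norm w / norm u) *\<^sub>R u" by (simp add: sgn_div_norm divide_inverse)
    finally have "w = (- norm w / norm u) *\<^sub>R u" .
    moreover have "(- norm w / norm u) *\<^sub>R u \<in> span {u}" by (intro span_scale span_base) simp
    ultimately show False using assms(2) by simp
  qed
  then have "0 < ?b \<bullet> ?b" by simp
  moreover have "?b \<bullet> sgn u = 1 + sgn u \<bullet> sgn w" "?b \<bullet> sgn w = 1 + sgn u \<bullet> sgn w"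
    using unit[OF assms(1)] unit[OF \<open>w \<noteq> 0\<close>]
    by (simp_all add: inner_add_left inner_add_right inner_commute)
  moreover have "?b \<bullet> ?b = ?b \<bullet> sgn u + ?b \<bullet> sgn w" by (simp add: inner_add_right)
  ultimately have "0 < ?b \<bullet> sgn u" "0 < ?b \<bullet> sgn w" by linarith+
  then have "0 < ?b \<bullet> u" "0 < ?b \<bullet> w"
    using assms(1) \<open>w \<noteq> 0\<close> by (simp_all add: sgn_div_norm zero_less_mult_iff)
  then show ?thesis by blast
qed

lemma pos_scale_if_not_antipodal:
  fixes u w :: "'a::real_vector"
  assumes "w \<in> span {u}" "w \<noteq> 0" "\<forall>c>0. w \<noteq> - c *\<^sub>R u"
  shows "\<exists>c>0. w = c *\<^sub>R u"
proof -
  obtain c where c: "w = c *\<^sub>R u" using assms(1) by (auto simp: span_singleton)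
  with assms(2) have "c \<noteq> 0" by auto
  moreover have "\<not> c < 0"
  proof
    assume "c < 0"
    then show False using assms(3)[rule_format, of "- c"] c by simp
  qed
  ultimately have "c > 0" by linarith
  with c show ?thesis by blast
qed

section \<open>The Sylvester--Gallai theorem\<close>

lemma three_reals_same_side:
  fixes a b c s :: real
  assumes "a \<noteq> b" "a \<noteq> c" "b \<noteq> c"
  shows "\<exists>x\<in>{a, b, c}. \<exists>y\<in>{a, b, c}. 0 \<le> (x - s) * (y - s) \<and> \<bar>x - s\<bar> < \<bar>y - s\<bar>"
proof -
  have pair: "\<exists>x\<in>{a, b, c}. \<exists>y\<in>{a, b, c}. 0 \<le> (x - s) * (y - s) \<and> \<bar>x - s\<bar> < \<bar>y - s\<bar>"
    if "p \<in> {a, b, c}" "q \<in> {a, b, c}" "p \<noteq> q" "0 \<le> (p - s) * (q - s)" for p q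
  proof -
    have "\<bar>p - s\<bar> \<noteq> \<bar>q - s\<bar>"
    proof
      assume "\<bar>p - s\<bar> = \<bar>q - s\<bar>"
      with that(3) have "p - s = - (q - s)" by (auto simp: abs_eq_iff)
      then have "(p - s) * (q - s) = - ((q - s) * (q - s))" by (simp only: mult_minus_left)
      with that(4) have "(q - s) * (q - s) \<le> 0" by linarith
      then have "q = s" by (auto simp: mult_le_0_iff)
      with \<open>p - s = - (q - s)\<close> that(3) show False by simp
    qed
    then consider "\<bar>p - s\<bar> < \<bar>q - s\<bar>" | "\<bar>q - s\<bar> < \<bar>p - s\<bar>" by linarith
    then show ?thesis using that by cases (blast, metis mult.commute)
  qed
  have "0 \<le> (a - s) * (b - s) \<or> 0 \<le> (a - s) * (c - s) \<or> 0 \<le> (b - s) * (c - s)"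
    by (cases "0 \<le> a - s"; cases "0 \<le> b - s"; cases "0 \<le> c - s") (simp_all add: zero_le_mult_iff)
  then show ?thesis using pair assms by blast
qed

definition sqdist_to_line :: "'a::real_inner \<Rightarrow> 'a \<Rightarrow> 'a \<Rightarrow> real" where
  "sqdist_to_line p q r = (norm (p - q))\<^sup>2 - ((p - q) \<bullet> (r - q))\<^sup>2 / (norm (r - q))\<^sup>2"

lemma collinear_3_iff_on_line:
  fixes q r c :: "'a::real_vector"
  assumes "q \<noteq> r"
  shows "collinear {q, r, c} \<longleftrightarrow> (\<exists>t. c = q + t *\<^sub>R (r - q))"
  using assms by (auto simp: collinear_3_affine_hull affine_hull_2_alt)

lemma kelly_inequality:
  fixes x y E W :: real
  assumes "0 < E" "0 < W" "0 \<le> x * y" "\<bar>x\<bar> < \<bar>y\<bar>"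
  shows "x\<^sup>2 * E + W - (x * y * E + W)\<^sup>2 / (y\<^sup>2 * E + W) < W"
proof -
  have "x\<^sup>2 \<le> x * y"
  proof -
    have "x\<^sup>2 = \<bar>x\<bar> * \<bar>x\<bar>" by (simp add: power2_eq_square abs_mult_self_eq)
    also have "\<dots> \<le> \<bar>x\<bar> * \<bar>y\<bar>" using assms(4) by (intro mult_left_mono) auto
    also have "\<dots> = x * y" using assms(3) by (simp flip: abs_mult)
    finally show ?thesis .
  qed
  then have "x\<^sup>2 * E * W \<le> x * y * E * W" using assms(1,2) by simp
  moreover have "0 \<le> x * y * E * W" using assms by simp
  moreover have "x\<^sup>2 * E * (y\<^sup>2 * E + W) = (x * y * E)\<^sup>2 + x\<^sup>2 * E * W"
    "(x * y * E + W)\<^sup>2 = (x * y * E)\<^sup>2 + 2 * (x * y * E * W) + W * W"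
    by (simp_all add: power2_eq_square algebra_simps)
  moreover have "0 < W * W" using assms(2) by simp
  ultimately have "x\<^sup>2 * E * (y\<^sup>2 * E + W) < (x * y * E + W)\<^sup>2" by linarith
  moreover have "0 < y\<^sup>2 * E + W" using assms(1,2) by (simp add: add_nonneg_pos)
  ultimately show ?thesis by (simp add: less_divide_eq)
qed

(* \<open>s\<close> is the parameter of the foot of the perpendicular from \<open>p\<close> to the line \<open>q + t e\<close>. *)
lemma sqdist_to_line_decrease:
  fixes p q e :: "'a::real_inner"
  assumes ncol: "\<not> collinear {q, q + e, p}" and s: "s = (p - q) \<bullet> e / (e \<bullet> e)"
    and side: "0 \<le> (la - s) * (lb - s)" "\<bar>la - s\<bar> < \<bar>lb - s\<bar>"
  shows "\<not> collinear {p, q + lb *\<^sub>R e, q + la *\<^sub>R e}"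
    and "sqdist_to_line (q + la *\<^sub>R e) p (q + lb *\<^sub>R e) < sqdist_to_line p q (q + e)"
proof -
  define w where "w = p - q - s *\<^sub>R e"
  define E where "E = e \<bullet> e"
  define W where "W = w \<bullet> w"
  define x where "x = la - s"
  define y where "y = lb - s"
  have "e \<noteq> 0" using ncol by auto
  then have E: "0 < E" by (simp add: E_def)
  have we: "w \<bullet> e = 0" "e \<bullet> w = 0"
    using E unfolding w_def s E_def by (simp_all add: inner_diff_left inner_diff_right inner_commute)
  have "w \<noteq> 0"
  proof
    assume "w = 0"
    then have "p = q + s *\<^sub>R ((q + e) - q)" by (simp add: w_def algebra_simps)
    then show False using ncol \<open>e \<noteq> 0\<close> by (simp add: collinear_3_iff_on_line)
  qed
  then have W: "0 < W" by (simp add: W_def)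
  have A: "q + la *\<^sub>R e - p = x *\<^sub>R e - w" and B: "q + lb *\<^sub>R e - p = y *\<^sub>R e - w"
    by (simp_all add: w_def x_def y_def algebra_simps)
  have "p \<noteq> q + lb *\<^sub>R e"
  proof
    assume "p = q + lb *\<^sub>R e"
    then have "(y *\<^sub>R e - w) \<bullet> w = 0" using B by simp
    then show False using W by (simp add: inner_diff_left we W_def)
  qed
  moreover have "q + la *\<^sub>R e \<noteq> p + t *\<^sub>R (q + lb *\<^sub>R e - p)" for t
  proof
    assume "q + la *\<^sub>R e = p + t *\<^sub>R (q + lb *\<^sub>R e - p)"
    then have "q + la *\<^sub>R e - p = t *\<^sub>R (q + lb *\<^sub>R e - p)" by (simp add: algebra_simps)
    then have eq: "x *\<^sub>R e - w = t *\<^sub>R (y *\<^sub>R e - w)" using A B by simp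
    then have "(x *\<^sub>R e - w) \<bullet> w = (t *\<^sub>R (y *\<^sub>R e - w)) \<bullet> w" by simp
    then have "t = 1" using W by (simp add: inner_diff_left we W_def)
    with eq have "(x - y) *\<^sub>R e = 0" by (simp add: algebra_simps)
    then show False using \<open>e \<noteq> 0\<close> side(2) by (simp add: x_def y_def)
  qed
  ultimately show "\<not> collinear {p, q + lb *\<^sub>R e, q + la *\<^sub>R e}"
    by (simp add: collinear_3_iff_on_line)
  have pq: "p - q = s *\<^sub>R e + w" by (simp add: w_def)
  have "sqdist_to_line p q (q + e) = (s\<^sup>2 * E + W) - (s * E)\<^sup>2 / E"
    unfolding sqdist_to_line_def power2_norm_eq_inner add_diff_cancel_left' pq
    by (simp add: inner_add_left inner_add_right we E_def W_def power2_eq_square)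
  also have "\<dots> = W" using E by (simp add: power2_eq_square)
  finally have old: "sqdist_to_line p q (q + e) = W" .
  have "sqdist_to_line (q + la *\<^sub>R e) p (q + lb *\<^sub>R e)
      = x\<^sup>2 * E + W - (x * y * E + W)\<^sup>2 / (y\<^sup>2 * E + W)"
    unfolding sqdist_to_line_def A B power2_norm_eq_inner
    by (simp add: inner_diff_left inner_diff_right we E_def W_def power2_eq_square mult_ac)
  also have "\<dots> < W"
    using kelly_inequality[OF E W] side by (simp add: x_def y_def)
  finally show "sqdist_to_line (q + la *\<^sub>R e) p (q + lb *\<^sub>R e) < sqdist_to_line p q (q + e)"
    using old by simp
qed

lemma not_collinear_imp_triangle:
  fixes X :: "'a::real_vector set"
  assumes "\<not> collinear X"
  shows "\<exists>p\<in>X. \<exists>q\<in>X. \<exists>r\<in>X. \<not> collinear {q, r, p}"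
proof -
  have "\<exists>q\<in>X. \<exists>r\<in>X. q \<noteq> r"
  proof (rule ccontr)
    assume "\<not> ?thesis"
    then have "X \<subseteq> {SOME x. x \<in> X}" by (metis empty_iff singletonI someI subsetI)
    then show False using assms collinear_subset collinear_sing by blast
  qed
  then obtain q r where qr: "q \<in> X" "r \<in> X" "q \<noteq> r" by blast
  then have "insert q (insert r X) = X" by auto
  then obtain p where "p \<in> X" "\<not> collinear {q, r, p}"
    using collinear_triples[OF qr(3), of X] assms by auto
  with qr show ?thesis by blast
qed

(* Kelly's proof: a point and a line through two other points of minimal positive distance
   cannot carry a third point on the line. *)
lemma sylvester_gallai:
  fixes X :: "'a::real_inner set"
  assumes "finite X" "\<not> collinear X"
  shows "\<exists>q\<in>X. \<exists>r\<in>X. q \<noteq> r \<and> (\<forall>c\<in>X. collinear {q, r, c} \<longrightarrow> c = q \<or> c = r)"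
proof (rule ccontr)
  assume no_ordinary: "\<not> ?thesis"
  define T where "T = {(p, q, r). p \<in> X \<and> q \<in> X \<and> r \<in> X \<and> \<not> collinear {q, r, p}}"
  have "T \<subseteq> X \<times> X \<times> X" by (auto simp: T_def)
  then have "finite T" using assms(1) by (auto intro: finite_subset)
  moreover have "T \<noteq> {}"
    using not_collinear_imp_triangle[OF assms(2)] by (auto simp: T_def)
  ultimately obtain z where "is_arg_min (\<lambda>(p, q, r). sqdist_to_line p q r) (\<lambda>z. z \<in> T) z"
    using ex_is_arg_min_if_finite by blast
  then obtain p q r where pqr: "(p, q, r) \<in> T"
    and min: "\<And>p' q' r'. (p', q', r') \<in> T \<Longrightarrow> \<not> sqdist_to_line p' q' r' < sqdist_to_line p q r"
    unfolding is_arg_min_def by (cases z) fastforce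
  have X: "p \<in> X" "q \<in> X" "r \<in> X" and ncol: "\<not> collinear {q, r, p}"
    using pqr by (auto simp: T_def)
  then have "q \<noteq> r" by auto
  then obtain c where c: "c \<in> X" "c \<noteq> q" "c \<noteq> r" "collinear {q, r, c}"
    using no_ordinary X by blast
  define e where "e = r - q"
  obtain l where l: "c = q + l *\<^sub>R e"
    using c(4) \<open>q \<noteq> r\<close> by (auto simp: collinear_3_iff_on_line e_def)
  have "l \<noteq> 0" "l \<noteq> 1" using c(2,3) l by (auto simp: e_def)
  define s where "s = (p - q) \<bullet> e / (e \<bullet> e)"
  have "(0::real) \<noteq> 1" "0 \<noteq> l" "1 \<noteq> l" using \<open>l \<noteq> 0\<close> \<open>l \<noteq> 1\<close> by auto
  from three_reals_same_side[OF this, of s]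
  obtain la lb where lab: "la \<in> {0, 1, l}" "lb \<in> {0, 1, l}"
    and side: "0 \<le> (la - s) * (lb - s)" "\<bar>la - s\<bar> < \<bar>lb - s\<bar>"
    by blast
  have on_X: "q + u *\<^sub>R e \<in> X" if "u \<in> {0, 1, l}" for u
    using that X c(1) l by (auto simp: e_def)
  have ncol': "\<not> collinear {q, q + e, p}" using ncol by (simp add: e_def)
  have "(q + la *\<^sub>R e, p, q + lb *\<^sub>R e) \<in> T"
    using sqdist_to_line_decrease(1)[OF ncol' s_def side] on_X lab X by (auto simp: T_def)
  moreover have "sqdist_to_line (q + la *\<^sub>R e) p (q + lb *\<^sub>R e) < sqdist_to_line p q r"
    using sqdist_to_line_decrease(2)[OF ncol' s_def side] by (simp add: e_def)
  ultimately show False using min by blast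
qed

section \<open>Central projection\<close>

(* Projection from the origin onto the affine hyperplane \<open>a \<bullet> x = 1\<close>. *)
definition central_proj :: "'a::real_inner \<Rightarrow> 'a \<Rightarrow> 'a" where
  "central_proj a u = (1 / (a \<bullet> u)) *\<^sub>R u"

lemma central_proj_eq_iff:
  fixes a u w :: "'a::real_inner"
  assumes "a \<bullet> u \<noteq> 0" "a \<bullet> w \<noteq> 0"
  shows "central_proj a u = central_proj a w \<longleftrightarrow> w \<in> span {u}"
proof
  assume eq: "central_proj a u = central_proj a w"
  have "w = (a \<bullet> w) *\<^sub>R central_proj a w" using assms by (simp add: central_proj_def)
  also have "\<dots> = ((a \<bullet> w) / (a \<bullet> u)) *\<^sub>R u"
    unfolding eq[symmetric] by (simp add: central_proj_def)
  finally show "w \<in> span {u}" by (metis span_base span_scale singletonI)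
next
  assume "w \<in> span {u}"
  then obtain c where "w = c *\<^sub>R u" by (auto simp: span_singleton)
  then show "central_proj a u = central_proj a w"
    using assms by (simp add: central_proj_def)
qed

lemma collinear_central_proj_iff:
  fixes a u w z :: "'a::real_inner"
  assumes "a \<bullet> u \<noteq> 0" "a \<bullet> w \<noteq> 0" "a \<bullet> z \<noteq> 0" "w \<notin> span {u}"
  shows "collinear {central_proj a u, central_proj a w, central_proj a z} \<longleftrightarrow> z \<in> span {u, w}"
proof -
  have "central_proj a u \<noteq> central_proj a w" using assms central_proj_eq_iff by blast
  then have "collinear {central_proj a u, central_proj a w, central_proj a z} \<longleftrightarrow>
      (\<exists>\<alpha> \<beta>. central_proj a z = \<alpha> *\<^sub>R central_proj a u + \<beta> *\<^sub>R central_proj a w \<and> \<alpha> + \<beta> = 1)"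
    by (auto simp: collinear_3_affine_hull affine_hull_2)
  also have "\<dots> \<longleftrightarrow> z \<in> span {u, w}"
  proof
    assume "\<exists>\<alpha> \<beta>. central_proj a z = \<alpha> *\<^sub>R central_proj a u + \<beta> *\<^sub>R central_proj a w \<and> \<alpha> + \<beta> = 1"
    then obtain \<alpha> \<beta> where eq: "central_proj a z = \<alpha> *\<^sub>R central_proj a u + \<beta> *\<^sub>R central_proj a w"
      by blast
    have "z = (a \<bullet> z) *\<^sub>R central_proj a z" using assms(3) by (simp add: central_proj_def)
    also have "\<dots> = ((a \<bullet> z) * \<alpha> / (a \<bullet> u)) *\<^sub>R u + ((a \<bullet> z) * \<beta> / (a \<bullet> w)) *\<^sub>R w"
      unfolding eq by (simp add: central_proj_def scaleR_add_right)
    finally show "z \<in> span {u, w}" unfolding span_pair_iff by blast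
  next
    assume "z \<in> span {u, w}"
    then obtain \<alpha> \<beta> where z: "z = \<alpha> *\<^sub>R u + \<beta> *\<^sub>R w" unfolding span_pair_iff by blast
    then have "a \<bullet> z = \<alpha> * (a \<bullet> u) + \<beta> * (a \<bullet> w)" by (simp add: inner_add_right)
    then have "central_proj a z = (\<alpha> * (a \<bullet> u) / (a \<bullet> z)) *\<^sub>R central_proj a u
        + (\<beta> * (a \<bullet> w) / (a \<bullet> z)) *\<^sub>R central_proj a w
      \<and> \<alpha> * (a \<bullet> u) / (a \<bullet> z) + \<beta> * (a \<bullet> w) / (a \<bullet> z) = 1"
      using assms z by (simp add: central_proj_def add_divide_distrib[symmetric] scaleR_add_right)
    then show "\<exists>\<alpha> \<beta>. central_proj a z = \<alpha> *\<^sub>R central_proj a u + \<beta> *\<^sub>R central_proj a w \<and> \<alpha> + \<beta> = 1"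
      by blast
  qed
  finally show ?thesis .
qed

section \<open>Balanced configurations contain antipodal pairs\<close>

definition pos_count :: "('i \<Rightarrow> 'a::real_inner) \<Rightarrow> 'a \<Rightarrow> 'i set \<Rightarrow> nat" where
  "pos_count v a X = card {x \<in> X. 0 < a \<bullet> v x}"

definition nonpos_count :: "('i \<Rightarrow> 'a::real_inner) \<Rightarrow> 'a \<Rightarrow> 'i set \<Rightarrow> nat" where
  "nonpos_count v a X = card {x \<in> X. a \<bullet> v x \<le> 0}"

definition halfspace_balanced :: "('i \<Rightarrow> 'a::real_inner) \<Rightarrow> 'i set \<Rightarrow> bool" where
  "halfspace_balanced v V \<longleftrightarrow> (\<forall>a. 2 * pos_count v a V \<le> card V + 1)"

lemma pos_count_mono:
  assumes "finite V" "X \<subseteq> {x \<in> V. 0 < c \<bullet> v x}"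
  shows "card X \<le> pos_count v c V"
  using assms unfolding pos_count_def by (intro card_mono) auto

lemma pos_count_add_nonpos_count:
  "finite X \<Longrightarrow> pos_count v a X + nonpos_count v a X = card X"
  unfolding pos_count_def nonpos_count_def
  by (subst card_Un_disjoint[symmetric]) (auto intro: arg_cong[where f = card])

lemma pos_count_le_deg_star:
  fixes v :: "'i \<Rightarrow> 'a::euclidean_space"
  assumes "finite V"
  shows "int (pos_count v a V) \<le> deg_star v V + int (vc_rank v V)"
proof -
  define S where "S = {card {x \<in> V. 0 < b \<bullet> v x} |b. b \<noteq> 0}"
  have "finite S"
    unfolding S_def by (rule finite_subset[of _ "{0..card V}"]) (auto intro!: card_mono assms)
  have "pos_count v a V \<le> Max S"
  proof (cases "a = 0")
    case True
    then show ?thesis by (simp add: pos_count_def)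
  next
    case False
    then have "pos_count v a V \<in> S" by (auto simp: S_def pos_count_def)
    with \<open>finite S\<close> show ?thesis by (rule Max_ge)
  qed
  then show ?thesis by (simp add: deg_star_def S_def)
qed

lemma two_halfspaces_cover_hyperplane_twice:
  fixes v :: "'i \<Rightarrow> 'a::real_inner"
  assumes "finite V" "\<forall>x\<in>V. a \<bullet> v x = 0 \<longrightarrow> 0 < b \<bullet> v x"
  shows "\<exists>c c'. card V + card {x \<in> V. a \<bullet> v x = 0} \<le> pos_count v c V + pos_count v c' V"
proof -
  define Z where "Z = {x \<in> V. a \<bullet> v x = 0}"
  define P where "P = {x \<in> V. 0 < a \<bullet> v x}"
  define N where "N = {x \<in> V. a \<bullet> v x < 0}"
  obtain t where t: "\<forall>f\<in>v ` V. (0 < a \<bullet> f \<longrightarrow> 0 < (t *\<^sub>R a + b) \<bullet> f)"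
    using perturbation_keeps_strict_signs[of "v ` V" a b] assms(1) by blast
  obtain t' where t': "\<forall>f\<in>v ` V. (0 < (- a) \<bullet> f \<longrightarrow> 0 < (t' *\<^sub>R (- a) + b) \<bullet> f)"
    using perturbation_keeps_strict_signs[of "v ` V" "- a" b] assms(1) by blast
  have "card (P \<union> Z) \<le> pos_count v (t *\<^sub>R a + b) V"
    using t assms by (intro pos_count_mono) (auto simp: P_def Z_def inner_add_left)
  moreover have "card (N \<union> Z) \<le> pos_count v (t' *\<^sub>R (- a) + b) V"
    using t' assms by (intro pos_count_mono) (auto simp: N_def Z_def inner_add_left inner_diff_left)
  moreover have "card V = card P + card N + card Z"
  proof -
    have "V = (P \<union> N) \<union> Z" by (auto simp: P_def N_def Z_def)
    moreover have "card (P \<union> N \<union> Z) = card (P \<union> N) + card Z" "card (P \<union> N) = card P + card N"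
      using assms(1) by (intro card_Un_disjoint; auto simp: P_def N_def Z_def)+
    ultimately show ?thesis by simp
  qed
  moreover have "card (P \<union> Z) = card P + card Z" "card (N \<union> Z) = card N + card Z"
    using assms(1) by (intro card_Un_disjoint; auto simp: P_def N_def Z_def)+
  ultimately have "card V + card Z \<le> pos_count v (t *\<^sub>R a + b) V + pos_count v (t' *\<^sub>R (- a) + b) V"
    by linarith
  then show ?thesis unfolding Z_def by blast
qed

lemma balanced_plane_has_third_direction:
  fixes v :: "'i \<Rightarrow> 'a::euclidean_space"
  assumes fin: "finite V" and nz: "\<forall>x\<in>V. v x \<noteq> 0" and bal: "halfspace_balanced v V"
    and no_antipodal: "\<forall>x\<in>V. \<forall>y\<in>V. \<forall>c>0. v y \<noteq> - c *\<^sub>R v x"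
    and i: "i \<in> V" and j: "j \<in> V" and ij: "v j \<notin> span {v i}"
  shows "\<exists>l\<in>V. v l \<in> span {v i, v j} \<and> v l \<notin> span {v i} \<and> v l \<notin> span {v j}"
proof (rule ccontr)
  assume no_third: "\<not> ?thesis"
  define U where "U = span {v i, v j}"
  have "finite (v ` {x \<in> V. v x \<notin> U})" using fin by simp
  moreover have "v ` {x \<in> V. v x \<notin> U} \<inter> span {v i, v j} = {}" by (auto simp: U_def)
  ultimately obtain a where a_plane: "\<forall>u\<in>{v i, v j}. a \<bullet> u = 0"
    and a_off: "\<forall>f\<in>v ` {x \<in> V. v x \<notin> U}. a \<bullet> f \<noteq> 0"
    using exists_normal_avoiding[of "v ` {x \<in> V. v x \<notin> U}" "{v i, v j}"] by blast
  obtain b where b_pos: "0 < b \<bullet> v i" "0 < b \<bullet> v j"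
    using exists_inner_pos_pair[OF _ ij] nz i by blast
  have "0 < b \<bullet> v x" if x: "x \<in> V" and ax: "a \<bullet> v x = 0" for x
  proof -
    have "v x \<in> U"
    proof (rule ccontr)
      assume "v x \<notin> U"
      then have "v x \<in> v ` {x \<in> V. v x \<notin> U}" using x by blast
      with a_off ax show False by blast
    qed
    then have "v x \<in> span {v i} \<or> v x \<in> span {v j}" using no_third x by (auto simp: U_def)
    then show ?thesis
    proof
      assume "v x \<in> span {v i}"
      then obtain c where "c > 0" "v x = c *\<^sub>R v i"
        using pos_scale_if_not_antipodal[of "v x" "v i"] nz no_antipodal i x by blast
      then show ?thesis using b_pos by simp
    next
      assume "v x \<in> span {v j}"
      then obtain c where "c > 0" "v x = c *\<^sub>R v j"
        using pos_scale_if_not_antipodal[of "v x" "v j"] nz no_antipodal j x by blast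
      then show ?thesis using b_pos by simp
    qed
  qed
  then obtain c c'
    where cc': "card V + card {x \<in> V. a \<bullet> v x = 0} \<le> pos_count v c V + pos_count v c' V"
    using two_halfspaces_cover_hyperplane_twice[OF fin] by blast
  have "i \<noteq> j" using ij by (auto intro: span_base)
  moreover have "card {i, j} \<le> card {x \<in> V. a \<bullet> v x = 0}"
    using a_plane i j fin by (intro card_mono) auto
  ultimately have "2 \<le> card {x \<in> V. a \<bullet> v x = 0}" by simp
  moreover have "2 * pos_count v c V \<le> card V + 1" "2 * pos_count v c' V \<le> card V + 1"
    using bal by (simp_all add: halfspace_balanced_def)
  ultimately show False using cc' by linarith
qed

lemma balanced_exists_antipodal_pair:
  fixes v :: "'i \<Rightarrow> 'a::euclidean_space"
  assumes fin: "finite V" and nz: "\<forall>x\<in>V. v x \<noteq> 0" and bal: "halfspace_balanced v V"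
    and rank: "3 \<le> dim (v ` V)"
  shows "\<exists>x\<in>V. \<exists>y\<in>V. \<exists>c>0. v y = - c *\<^sub>R v x"
proof (rule ccontr)
  assume "\<not> ?thesis"
  then have no_antipodal: "\<forall>x\<in>V. \<forall>y\<in>V. \<forall>c>0. v y \<noteq> - c *\<^sub>R v x" by blast
  have "\<forall>f\<in>v ` V. \<exists>s\<in>UNIV. s \<bullet> f \<noteq> 0" using nz by (metis UNIV_I imageE inner_eq_zero_iff)
  then obtain a where a: "\<forall>x\<in>V. a \<bullet> v x \<noteq> 0"
    using subspace_vector_nonorthogonal_to_all[of UNIV "v ` V"] fin by auto
  define p where "p x = central_proj a (v x)" for x
  have p_eq_iff: "p x = p y \<longleftrightarrow> v y \<in> span {v x}" if "x \<in> V" "y \<in> V" for x y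
    using central_proj_eq_iff a that unfolding p_def by blast
  have collinear_p_iff: "collinear {p x, p y, p z} \<longleftrightarrow> v z \<in> span {v x, v y}"
    if "x \<in> V" "y \<in> V" "z \<in> V" "v y \<notin> span {v x}" for x y z
    using collinear_central_proj_iff a that unfolding p_def by blast
  have "\<not> collinear (p ` V)"
  proof
    assume col: "collinear (p ` V)"
    obtain x y z where "x \<in> V" "y \<in> V" "z \<in> V" "v y \<notin> span {v x}" "v z \<notin> span {v x, v y}"
      using dim_ge_3_imp_independent_triple[OF rank] by blast
    moreover from this have "collinear {p x, p y, p z}" by (intro collinear_subset[OF col]) auto
    ultimately show False using collinear_p_iff by blast
  qed
  then obtain i j where i: "i \<in> V" and j: "j \<in> V" and "p i \<noteq> p j"
    and ordinary: "\<forall>l\<in>V. collinear {p i, p j, p l} \<longrightarrow> p l = p i \<or> p l = p j"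
    using sylvester_gallai[of "p ` V"] fin by auto
  then have ij: "v j \<notin> span {v i}" using p_eq_iff by blast
  then obtain l where "l \<in> V" "v l \<in> span {v i, v j}" "v l \<notin> span {v i}" "v l \<notin> span {v j}"
    using balanced_plane_has_third_direction[OF fin nz bal no_antipodal i j] by blast
  then show False using ordinary collinear_p_iff[OF i j] p_eq_iff i j ij by metis
qed

lemma halfspace_balanced_remove_antipodal_pair:
  fixes v :: "'i \<Rightarrow> 'a::real_inner"
  assumes fin: "finite V" and bal: "halfspace_balanced v V"
    and "x \<in> V" "y \<in> V" "x \<noteq> y" "v x \<noteq> 0" "v y = - c *\<^sub>R v x" "0 < c"
  shows "halfspace_balanced v (V - {x, y})"
  unfolding halfspace_balanced_def
proof
  fix a
  obtain t where t: "\<forall>f\<in>v ` V. 0 < a \<bullet> f \<longrightarrow> 0 < (t *\<^sub>R a + v x) \<bullet> f"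
    using perturbation_keeps_strict_signs[of "v ` V" a "v x"] fin by blast
  define a' where "a' = t *\<^sub>R a + v x"
  have "\<exists>w\<in>{x, y}. 0 < a' \<bullet> v w"
  proof (cases "a \<bullet> v x = 0")
    case True
    then have "a' \<bullet> v x = v x \<bullet> v x" by (simp add: a'_def inner_add_left)
    then show ?thesis using assms(6) by auto
  next
    case False
    then have "0 < a \<bullet> v x \<or> 0 < a \<bullet> v y" using assms(7,8) by (auto simp: mult_less_0_iff)
    then show ?thesis using t assms(3,4) by (auto simp: a'_def)
  qed
  then obtain w where w: "w \<in> {x, y}" "0 < a' \<bullet> v w" by blast
  have "insert w {z \<in> V - {x, y}. 0 < a \<bullet> v z} \<subseteq> {z \<in> V. 0 < a' \<bullet> v z}"
    using w t assms(3,4) by (auto simp: a'_def)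
  then have "card (insert w {z \<in> V - {x, y}. 0 < a \<bullet> v z}) \<le> pos_count v a' V"
    unfolding pos_count_def using fin by (intro card_mono) auto
  moreover have "card (insert w {z \<in> V - {x, y}. 0 < a \<bullet> v z}) = Suc (pos_count v a (V - {x, y}))"
    using w(1) fin by (auto simp: pos_count_def)
  moreover have "2 * pos_count v a' V \<le> card V + 1" using bal by (simp add: halfspace_balanced_def)
  moreover have "card (V - {x, y}) + 2 = card V"
  proof -
    have "card {x, y} \<le> card V" using assms(3,4) fin by (intro card_mono) auto
    then show ?thesis using assms(3-5) fin by (simp add: card_Diff_subset)
  qed
  ultimately show "2 * pos_count v a (V - {x, y}) \<le> card (V - {x, y}) + 1" by linarith
qed

section \<open>Aligned decompositions\<close>

definition indexed_partition :: "'i set \<Rightarrow> nat \<Rightarrow> (nat \<Rightarrow> 'i set) \<Rightarrow> bool" where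
  "indexed_partition V m Q \<longleftrightarrow> (\<Union>i\<le>m. Q i) = V \<and> (\<forall>i\<le>m. \<forall>j\<le>m. i \<noteq> j \<longrightarrow> Q i \<inter> Q j = {})"

definition aligned_decomposition ::
  "('i \<Rightarrow> 'a::real_inner) \<Rightarrow> 'i set \<Rightarrow> 'a \<Rightarrow> nat \<Rightarrow> (nat \<Rightarrow> 'i set) \<Rightarrow> bool" where
  "aligned_decomposition v V a m Q \<longleftrightarrow> indexed_partition V m Q \<and> (\<forall>x\<in>Q 0. 0 < a \<bullet> v x) \<and>
     (\<forall>i\<in>{1..m}. 1 \<le> nonpos_count v a (Q i) \<and>
        (\<forall>b. nonpos_count v a (Q i) \<le> nonpos_count v b (Q i)))"

lemma indexed_partition_subset: "indexed_partition V m Q \<Longrightarrow> i \<le> m \<Longrightarrow> Q i \<subseteq> V"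
  unfolding indexed_partition_def by blast

lemma indexed_partition_extend:
  assumes "indexed_partition V m Q" "W \<inter> V = {}"
  shows "indexed_partition (V \<union> W) (Suc m) (Q(Suc m := W))"
proof -
  have "(\<Union>i\<le>Suc m. (Q(Suc m := W)) i) = W \<union> (\<Union>i\<le>m. (Q(Suc m := W)) i)"
    unfolding atMost_Suc UN_insert by (simp only: fun_upd_same)
  also have "(\<Union>i\<le>m. (Q(Suc m := W)) i) = (\<Union>i\<le>m. Q i)" by (intro SUP_cong) auto
  finally have "(\<Union>i\<le>Suc m. (Q(Suc m := W)) i) = V \<union> W"
    using assms(1) by (auto simp: indexed_partition_def)
  moreover have "Q i \<inter> W = {}" "W \<inter> Q i = {}" if "i \<le> m" for i
    using indexed_partition_subset[OF assms(1) that] assms(2) by blast+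
  ultimately show ?thesis
    using assms(1) unfolding indexed_partition_def by (auto simp: le_Suc_eq)
qed

lemma nonpos_count_indexed_partition:
  assumes "finite V" "indexed_partition V m Q"
  shows "nonpos_count v b V = (\<Sum>i\<le>m. nonpos_count v b (Q i))"
proof -
  have "{x \<in> V. b \<bullet> v x \<le> 0} = (\<Union>i\<le>m. {x \<in> Q i. b \<bullet> v x \<le> 0})"
    using assms(2) unfolding indexed_partition_def by blast
  moreover have "finite (Q i)" if "i \<le> m" for i
    using indexed_partition_subset[OF assms(2) that] assms(1) by (rule finite_subset)
  ultimately show ?thesis
    using assms(2) unfolding nonpos_count_def indexed_partition_def
    by (simp add: card_UN_disjoint disjoint_iff)
qed

lemma codeg_star_eq_nonpos_count:
  assumes "finite X" "a \<noteq> 0" "\<forall>b. nonpos_count v a X \<le> nonpos_count v b X"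
  shows "codeg_star v X = nonpos_count v a X"
  unfolding codeg_star_def
proof (rule Min_eqI)
  show "finite {card {x \<in> X. b \<bullet> v x \<le> 0} |b. b \<noteq> 0}"
    by (rule finite_subset[of _ "{0..card X}"]) (auto intro!: card_mono assms(1))
qed (use assms in \<open>auto simp: nonpos_count_def\<close>)

lemma aligned_decomposition_imp_codeg_decomposition:
  fixes v :: "'i \<Rightarrow> 'a::euclidean_space"
  assumes fin: "finite V" and "a \<noteq> 0" and dec: "aligned_decomposition v V a m Q"
  shows "codeg_decomposition v V m Q"
proof -
  have part: "indexed_partition V m Q" using dec by (simp add: aligned_decomposition_def)
  have part_min: "1 \<le> nonpos_count v a (Q i)" "nonpos_count v a (Q i) \<le> nonpos_count v b (Q i)"
    if "i \<in> {1..m}" for i b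
    using dec that by (auto simp: aligned_decomposition_def)
  have codeg_part: "codeg_star v (Q i) = nonpos_count v a (Q i)" if "i \<in> {1..m}" for i
  proof -
    have "finite (Q i)"
      using indexed_partition_subset[OF part] that fin by (auto intro: finite_subset)
    then show ?thesis using codeg_star_eq_nonpos_count \<open>a \<noteq> 0\<close> part_min(2)[OF that] by blast
  qed
  have "{x \<in> Q 0. a \<bullet> v x \<le> 0} = {}"
    using dec by (force simp: aligned_decomposition_def)
  then have "nonpos_count v a (Q 0) = 0" unfolding nonpos_count_def by (metis card.empty)
  then have a_sum: "nonpos_count v a V = (\<Sum>i=1..m. nonpos_count v a (Q i))"
    using nonpos_count_indexed_partition[OF fin part, of v a]
    by (simp add: atMost_atLeast0 sum.atLeast_Suc_atMost)
  have "nonpos_count v a V \<le> nonpos_count v b V" for b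
  proof -
    have "nonpos_count v a V \<le> (\<Sum>i=1..m. nonpos_count v b (Q i))"
      unfolding a_sum by (intro sum_mono part_min(2))
    also have "\<dots> \<le> (\<Sum>i\<le>m. nonpos_count v b (Q i))"
      by (intro sum_mono2) auto
    finally show ?thesis using nonpos_count_indexed_partition[OF fin part, of v b] by simp
  qed
  then have "codeg_star v V = (\<Sum>i=1..m. codeg_star v (Q i))"
    using codeg_star_eq_nonpos_count[OF fin \<open>a \<noteq> 0\<close>] a_sum codeg_part by simp
  then show ?thesis
    using part codeg_part part_min(1)
    by (simp add: codeg_decomposition_def indexed_partition_def)
qed

lemma exists_nonpos_count_minimizer:
  fixes v :: "'i \<Rightarrow> 'a::euclidean_space"
  assumes "finite X"
  shows "\<exists>a. a \<noteq> 0 \<and> (\<forall>b. nonpos_count v a X \<le> nonpos_count v b X)"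
proof -
  obtain e :: 'a where "e \<noteq> 0" using nonzero_Basis SOME_Basis by blast
  then obtain a where a: "a \<noteq> 0" and min: "\<forall>b. b \<noteq> 0 \<longrightarrow> nonpos_count v a X \<le> nonpos_count v b X"
    using ex_has_least_nat[of "\<lambda>a. a \<noteq> 0" e "\<lambda>a. nonpos_count v a X"] by blast
  have "nonpos_count v a X \<le> nonpos_count v 0 X"
    using assms by (auto simp: nonpos_count_def intro: card_mono)
  with a min show ?thesis by metis
qed

lemma aligned_decomposition_strengthen:
  assumes "finite V" "aligned_decomposition v V a' m Q"
    and stronger: "\<forall>x\<in>V. 0 < a' \<bullet> v x \<longrightarrow> 0 < a \<bullet> v x"
  shows "aligned_decomposition v V a m Q"
proof -
  have part: "indexed_partition V m Q" using assms(2) by (simp add: aligned_decomposition_def)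
  have "nonpos_count v a (Q i) = nonpos_count v a' (Q i)" if "i \<in> {1..m}" for i
  proof (rule antisym)
    have "Q i \<subseteq> V" using indexed_partition_subset[OF part] that by simp
    then show "nonpos_count v a (Q i) \<le> nonpos_count v a' (Q i)"
      unfolding nonpos_count_def using assms(1) stronger
      by (intro card_mono) (auto intro: finite_subset simp: not_less[symmetric])
    show "nonpos_count v a' (Q i) \<le> nonpos_count v a (Q i)"
      using assms(2) that by (simp add: aligned_decomposition_def)
  qed
  then show ?thesis
    using assms(2) stronger indexed_partition_subset[OF part, of 0]
    by (auto simp: aligned_decomposition_def)
qed

lemma aligned_decomposition_extend:
  assumes "aligned_decomposition v V a m Q" "W \<inter> V = {}"
    and "1 \<le> nonpos_count v a W" "\<forall>b. nonpos_count v a W \<le> nonpos_count v b W"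
  shows "aligned_decomposition v (V \<union> W) a (Suc m) (Q(Suc m := W))"
  using assms indexed_partition_extend[of V m Q W]
  by (auto simp: aligned_decomposition_def le_Suc_eq)

lemma antipodal_pair_nonpos_count:
  assumes "x \<noteq> y" "v y = - c *\<^sub>R v x" "0 < c"
  shows "1 \<le> nonpos_count v b {x, y}"
    and "b \<bullet> v x \<noteq> 0 \<Longrightarrow> nonpos_count v b {x, y} = 1"
proof -
  have y_iff: "b \<bullet> v y \<le> 0 \<longleftrightarrow> 0 \<le> b \<bullet> v x"
    using assms(2,3) by (simp add: zero_le_mult_iff)
  have "{x, y} \<inter> {z. b \<bullet> v z \<le> 0} \<noteq> {}" using y_iff by force
  then show "1 \<le> nonpos_count v b {x, y}"
    by (auto simp: nonpos_count_def Suc_le_eq card_gt_0_iff Int_def)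
  assume "b \<bullet> v x \<noteq> 0"
  then have "{z \<in> {x, y}. b \<bullet> v z \<le> 0} = {x} \<or> {z \<in> {x, y}. b \<bullet> v z \<le> 0} = {y}"
    using y_iff assms(1) by force
  then show "nonpos_count v b {x, y} = 1" by (auto simp: nonpos_count_def)
qed

lemma dim_image_le_Diff:
  fixes v :: "'i \<Rightarrow> 'a::euclidean_space"
  assumes "\<forall>z\<in>W. v z \<in> span {u}"
  shows "dim (v ` V) \<le> dim (v ` (V - W)) + 1"
proof -
  have "v ` V \<subseteq> span (insert u (v ` (V - W)))"
    using assms by (auto intro: span_base span_mono[THEN subsetD, of "{u}"])
  then have "dim (v ` V) \<le> dim (span (insert u (v ` (V - W))))" by (rule dim_subset)
  then have "dim (v ` V) \<le> dim (insert u (v ` (V - W)))" by simp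
  then show ?thesis by (simp add: dim_insert split: if_splits)
qed

lemma aligned_decomposition_add_antipodal_pair:
  fixes v :: "'i \<Rightarrow> 'a::euclidean_space"
  assumes fin: "finite V" and xy: "x \<in> V" "y \<in> V" "x \<noteq> y"
    and nz: "v x \<noteq> 0" and anti: "v y = - c *\<^sub>R v x" "0 < c"
    and dec: "aligned_decomposition v (V - {x, y}) a' m Q"
  shows "\<exists>a. a \<noteq> 0 \<and> aligned_decomposition v V a (Suc m) (Q(Suc m := {x, y}))"
proof -
  obtain t where t: "\<forall>f\<in>v ` V. (0 < a' \<bullet> f \<longrightarrow> 0 < (t *\<^sub>R a' + v x) \<bullet> f)
      \<and> (a' \<bullet> f < 0 \<longrightarrow> (t *\<^sub>R a' + v x) \<bullet> f < 0)"
    using perturbation_keeps_strict_signs[of "v ` V" a' "v x"] fin by blast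
  define a where "a = t *\<^sub>R a' + v x"
  have ax: "a \<bullet> v x \<noteq> 0"
  proof (cases "a' \<bullet> v x = 0")
    case True
    then show ?thesis using nz by (simp add: a_def inner_add_left)
  next
    case False
    then have "0 < a' \<bullet> v x \<or> a' \<bullet> v x < 0" by linarith
    then show ?thesis using t xy(1) by (auto simp: a_def)
  qed
  have "aligned_decomposition v (V - {x, y}) a m Q"
    using aligned_decomposition_strengthen[OF _ dec] t fin by (simp add: a_def)
  moreover have "{x, y} \<inter> (V - {x, y}) = {}" by auto
  moreover have "1 \<le> nonpos_count v a {x, y}"
    by (rule antipodal_pair_nonpos_count(1)[OF xy(3) anti])
  moreover have "\<forall>b. nonpos_count v a {x, y} \<le> nonpos_count v b {x, y}"
    using antipodal_pair_nonpos_count[OF xy(3) anti] ax by simp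
  ultimately have "aligned_decomposition v ((V - {x, y}) \<union> {x, y}) a (Suc m) (Q(Suc m := {x, y}))"
    by (rule aligned_decomposition_extend)
  moreover have "(V - {x, y}) \<union> {x, y} = V" using xy by auto
  moreover have "a \<noteq> 0" using ax by auto
  ultimately show ?thesis by auto
qed

lemma antipodal_distinct:
  fixes v :: "'i \<Rightarrow> 'a::real_vector"
  assumes "v x \<noteq> 0" "v y = - c *\<^sub>R v x" "0 < c"
  shows "x \<noteq> y"
proof
  assume "x = y"
  with assms(2) have "v x + c *\<^sub>R v x = 0" by (simp add: eq_neg_iff_add_eq_0)
  then have "(1 + c) *\<^sub>R v x = 0" by (simp add: scaleR_add_left)
  with assms(1,3) show False by simp
qed

lemma balanced_aligned_decomposition_rank_le_2:
  fixes v :: "'i \<Rightarrow> 'a::euclidean_space"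
  assumes fin: "finite V" and nz: "\<forall>x\<in>V. v x \<noteq> 0" and bal: "halfspace_balanced v V"
    and rank: "dim (v ` V) \<le> 2"
  shows "\<exists>a m Q. a \<noteq> 0 \<and> aligned_decomposition v V a m Q \<and> dim (v ` V) \<le> m + 1"
proof (cases "card V \<le> 1")
  case True
  obtain a where a: "a \<noteq> 0" "\<forall>x\<in>V. 0 < a \<bullet> v x"
  proof (cases "V = {}")
    case True
    obtain e :: 'a where "e \<noteq> 0" using nonzero_Basis SOME_Basis by blast
    with True that show ?thesis by blast
  next
    case False
    with \<open>card V \<le> 1\<close> fin have "card V = 1" by (simp add: le_antisym Suc_leI card_gt_0_iff)
    then obtain x where "V = {x}" by (rule card_1_singletonE)
    with nz that show ?thesis by auto
  qed
  then have "aligned_decomposition v V a 0 (\<lambda>_. V)"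
    by (simp add: aligned_decomposition_def indexed_partition_def)
  moreover have "dim (v ` V) \<le> 1"
    using dim_le_card'[of "v ` V"] card_image_le[of V v] fin True by simp
  ultimately show ?thesis using a(1) by auto
next
  case False
  obtain a where a: "a \<noteq> 0" "\<forall>b. nonpos_count v a V \<le> nonpos_count v b V"
    using exists_nonpos_count_minimizer fin by blast
  have "2 * pos_count v a V \<le> card V + 1" using bal by (simp add: halfspace_balanced_def)
  then have "1 \<le> nonpos_count v a V"
    using pos_count_add_nonpos_count[OF fin, of v a] False by linarith
  moreover have "aligned_decomposition v {} a 0 (\<lambda>_. {})"
    by (simp add: aligned_decomposition_def indexed_partition_def)
  ultimately have "aligned_decomposition v ({} \<union> V) a 1 ((\<lambda>_. {})(1 := V))"
    using aligned_decomposition_extend[of v "{}" a 0] a(2) by simp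
  then have "aligned_decomposition v V a 1 ((\<lambda>_. {})(1 := V))" by simp
  moreover have "dim (v ` V) \<le> 1 + 1" using rank by simp
  ultimately show ?thesis using a(1) by blast
qed

lemma balanced_aligned_decomposition:
  fixes v :: "'i \<Rightarrow> 'a::euclidean_space"
  assumes "finite V" "\<forall>x\<in>V. v x \<noteq> 0" "halfspace_balanced v V"
  shows "\<exists>a m Q. a \<noteq> 0 \<and> aligned_decomposition v V a m Q \<and> dim (v ` V) \<le> m + 1"
  using assms
proof (induction "card V" arbitrary: V rule: less_induct)
  case less
  note fin = less.prems(1) and nz = less.prems(2) and bal = less.prems(3)
  show ?case
  proof (cases "dim (v ` V) \<le> 2")
    case True
    then show ?thesis by (rule balanced_aligned_decomposition_rank_le_2[OF fin nz bal])
  next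
    case False
    then have "3 \<le> dim (v ` V)" by simp
    then obtain x y c where xy: "x \<in> V" "y \<in> V" and anti: "v y = - c *\<^sub>R v x" "0 < c"
      using balanced_exists_antipodal_pair[OF fin nz bal] by blast
    have "x \<noteq> y" using antipodal_distinct[of v x y c] nz xy(1) anti by blast
    have "card (V - {x, y}) < card V" using xy fin by (intro psubset_card_mono) auto
    moreover have "halfspace_balanced v (V - {x, y})"
      using halfspace_balanced_remove_antipodal_pair[OF fin bal xy \<open>x \<noteq> y\<close> _ anti] nz xy by blast
    ultimately obtain a' m Q where dec: "aligned_decomposition v (V - {x, y}) a' m Q"
      and rank: "dim (v ` (V - {x, y})) \<le> m + 1"
      using less.hyps[of "V - {x, y}"] fin nz by blast
    obtain a where "a \<noteq> 0" "aligned_decomposition v V a (Suc m) (Q(Suc m := {x, y}))"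
      using aligned_decomposition_add_antipodal_pair[OF fin xy \<open>x \<noteq> y\<close> _ anti dec] nz xy by blast
    moreover have "dim (v ` V) \<le> dim (v ` (V - {x, y})) + 1"
      using anti
      by (intro dim_image_le_Diff[of _ _ "v x"]) (auto intro: span_base span_scale span_neg)
    ultimately show ?thesis using rank by (intro exI[of _ a] exI[of _ "Suc m"]) auto
  qed
qed

theorem mainTheorem6:
  fixes v :: "'i \<Rightarrow> 'a::euclidean_space" and V :: "'i set"
    and r n :: nat and d \<delta> :: int
  assumes "finite V"
    and "vc_rank v V = r"
    and "\<forall>i\<in>V. v i \<noteq> 0"
    and "deg_star v V = \<delta>"
    and "card V = n"
    and "int n = int r + d + 1"
    and "int n = 2 * int r + 2 * \<delta> - 1"
  shows "\<exists>m P. codeg_decomposition v V m P \<and> int m \<ge> int r - 1"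
proof -
  \<comment> \<open>The hypothesis on \<open>d\<close> merely defines it.\<close>
  have "halfspace_balanced v V"
    unfolding halfspace_balanced_def
  proof
    fix a
    have "int (pos_count v a V) \<le> \<delta> + int r"
      using pos_count_le_deg_star[OF assms(1), of v a] assms(2,4) by simp
    then show "2 * pos_count v a V \<le> card V + 1" using assms(5,7) by linarith
  qed
  then obtain a m Q where "a \<noteq> 0" and dec: "aligned_decomposition v V a m Q"
    and rank: "dim (v ` V) \<le> m + 1"
    using balanced_aligned_decomposition[OF assms(1,3)] by blast
  have "codeg_decomposition v V m Q"
    by (rule aligned_decomposition_imp_codeg_decomposition[OF assms(1) \<open>a \<noteq> 0\<close> dec])
  moreover have "int r - 1 \<le> int m" using rank assms(2) by (simp add: vc_rank_def)
  ultimately show ?thesis by blast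
qed

end
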